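(* Let $n\geq 3$, $d\geq 2$ and $\ell\in\mathbb{R}_{>0}^n$. The map $\varphi_d:M_d(\ell)\to M_{d+1}(\ell)$ is $2$-to-$1$ on the set of $d$-dimensional polygons and $1$-to-$1$ elsewhere; that is, for $[P]\in M_d(\ell)$ the set $\varphi_d^{-1}(\varphi_d([P]))$ has exactly two elements if $\dim(P)=d$ and exactly one element if $\dim(P)<d$.
   Context: $V_d(\ell)=\{(\mathbf{v}_1,\ldots,\mathbf{v}_{n-1})\in(\mathbb{R}^d)^{n-1} : \|\mathbf{v}_i-\mathbf{v}_{i-1}\|=l_i,\ i=1,\ldots,n\}$ with $\mathbf{v}_0=\mathbf{v}_n=\mathbf{0}$; $M_d(\ell)=V_d(\ell)/SO(d)$ with $SO(d)$ acting diagonally, $[P]$ the class of $P$. $\dim(P)$ (and $\dim([P])$) is the dimension of the linear span of the vertices of $P$. For a fixed linear Euclidean isometry $f_d:\mathbb{R}^d\to\mathbb{R}^{d+1}$, $F_d(\mathbf{v}_1,\ldots,\mathbf{v}_{n-1})=(f_d(\mathbf{v}_1),\ldots,f_d(\mathbf{v}_{n-1}))$ and $\varphi_d([P])=[F_d(P)]$. *)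

theory Defs
  imports Jordan_Normal_Form.DL_Rank
begin

text \<open>Points of R^d are real vectors of dimension d. A polygon
(v_1,...,v_{n-1}) in (R^d)^{n-1} is a list P of length n-1; v_0 = v_n = 0.
The length vector l = (l_1,...,l_n) is a list of length n.\<close>

definition vtx :: "nat \<Rightarrow> nat \<Rightarrow> real vec list \<Rightarrow> nat \<Rightarrow> real vec" where
  "vtx d n P i = (if i = 0 \<or> i = n then 0\<^sub>v d else P ! (i - 1))"

definition enorm :: "real vec \<Rightarrow> real" where
  "enorm v = sqrt (v \<bullet> v)"

definition Vsp :: "nat \<Rightarrow> real list \<Rightarrow> real vec list set" where
  "Vsp d l = {P. length P = length l - 1 \<and> (\<forall>v\<in>set P. v \<in> carrier_vec d) \<and>
     (\<forall>i\<in>{1..length l}. enorm (vtx d (length l) P i - vtx d (length l) P (i - 1)) = l ! (i - 1))}"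

definition SOd :: "nat \<Rightarrow> real mat set" where
  "SOd d = {A \<in> carrier_mat d d. A * A\<^sup>T = 1\<^sub>m d \<and> det A = 1}"

definition cls :: "nat \<Rightarrow> real vec list \<Rightarrow> real vec list set" where
  "cls d P = {map (\<lambda>v. A *\<^sub>v v) P | A. A \<in> SOd d}"

definition Msp :: "nat \<Rightarrow> real list \<Rightarrow> real vec list set set" where
  "Msp d l = cls d ` Vsp d l"

text \<open>dim(P): dimension of the linear span of the vertices (v_0 = v_n = 0 add nothing).\<close>
definition pdim :: "nat \<Rightarrow> real vec list \<Rightarrow> nat" where
  "pdim d P = vec_space.rank d (mat_of_cols d P)"

definition lin_isom :: "nat \<Rightarrow> real mat \<Rightarrow> bool" where
  "lin_isom d B \<longleftrightarrow> B \<in> carrier_mat (d + 1) d \<and> B\<^sup>T * B = 1\<^sub>m d"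

definition Fmap :: "real mat \<Rightarrow> real vec list \<Rightarrow> real vec list" where
  "Fmap B P = map (\<lambda>v. B *\<^sub>v v) P"

definition phi :: "nat \<Rightarrow> real mat \<Rightarrow> real vec list set \<Rightarrow> real vec list set" where
  "phi d B c = cls (d + 1) (Fmap B (SOME P. P \<in> c))"

end

theory Submission
  imports Defs
begin

text \<open>Let u be a unit normal to the image of the isometric embedding B. The images B P and B Q
  of two polygons are SO(d+1)-congruent exactly when Q = C P for some C in O(d): an
  orientation-reversing C lifts to a rotation once it is composed with the reflection in u, and
  conversely a rotation relating B P to B Q can be made to fix u by a Householder reflection, after
  which it restricts to the hyperplane. Hence, for any reflection R of R^d, the fibre of phi
  through [P] is {[P], [R P]}. These two classes coincide iff some orientation-reversing
  orthogonal map fixes every vertex of P, i.e. iff the vertices of P lie in a hyperplane, i.e.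
  iff dim P < d.\<close>

definition Od :: "nat \<Rightarrow> real mat set" where
  "Od n = {A \<in> carrier_mat n n. A * A\<^sup>T = 1\<^sub>m n}"

abbreviation act :: "real mat \<Rightarrow> real vec list \<Rightarrow> real vec list" where
  "act A P \<equiv> map (\<lambda>v. A *\<^sub>v v) P"

lemma Od_carrier: "A \<in> Od n \<Longrightarrow> A \<in> carrier_mat n n"
  unfolding Od_def by simp

lemma Od_transpose_mult: "A \<in> Od n \<Longrightarrow> A\<^sup>T * A = 1\<^sub>m n"
  unfolding Od_def by (auto intro: mat_mult_left_right_inverse)

lemma SOd_iff: "A \<in> SOd n \<longleftrightarrow> A \<in> Od n \<and> det A = 1"
  unfolding SOd_def Od_def by auto

lemma transpose_in_Od: "A \<in> Od n \<Longrightarrow> A\<^sup>T \<in> Od n"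
  using Od_transpose_mult unfolding Od_def by auto

lemma one_in_Od: "1\<^sub>m n \<in> Od n"
  unfolding Od_def by simp

lemma transpose_mult3:
  fixes X Y Z :: "'a :: comm_semiring_0 mat"
  assumes "X \<in> carrier_mat m k" "Y \<in> carrier_mat k l" "Z \<in> carrier_mat l p"
  shows "(X * Y * Z)\<^sup>T = Z\<^sup>T * Y\<^sup>T * X\<^sup>T"
proof -
  have "(X * Y * Z)\<^sup>T = Z\<^sup>T * (X * Y)\<^sup>T"
    using assms by (intro transpose_mult[of _ m l]) auto
  also have "(X * Y)\<^sup>T = Y\<^sup>T * X\<^sup>T" using assms by (intro transpose_mult[of _ m k]) auto
  also have "Z\<^sup>T * (Y\<^sup>T * X\<^sup>T) = Z\<^sup>T * Y\<^sup>T * X\<^sup>T"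
    using assms by (intro assoc_mult_mat[symmetric]) auto
  finally show ?thesis .
qed

lemma mult_in_Od: assumes "A \<in> Od n" "B \<in> Od n" shows "A * B \<in> Od n"
proof -
  have A: "A \<in> carrier_mat n n" and B: "B \<in> carrier_mat n n" using assms Od_carrier by auto
  have "A * B * (A * B)\<^sup>T = A * (B * B\<^sup>T) * A\<^sup>T"
    using A B by (simp add: transpose_mult assoc_mult_mat[of _ n n _ n _ n])
  also have "\<dots> = 1\<^sub>m n" using assms A unfolding Od_def by simp
  finally show ?thesis using A B unfolding Od_def by simp
qed

lemma det_Od: assumes "A \<in> Od n" shows "det A = 1 \<or> det A = -1"
proof -
  have A: "A \<in> carrier_mat n n" using assms Od_carrier by auto
  have "det A * det A = 1"
    using det_mult[OF A, of "A\<^sup>T"] det_transpose[OF A] assms unfolding Od_def by auto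
  then show ?thesis by (metis square_eq_1_iff)
qed

lemma Od_transpose_mult_vec: "A \<in> Od n \<Longrightarrow> x \<in> carrier_vec n \<Longrightarrow> A\<^sup>T *\<^sub>v (A *\<^sub>v x) = x"
  using Od_transpose_mult[of A n] Od_carrier[of A n]
  by (metis assoc_mult_mat_vec one_mult_mat_vec transpose_carrier_mat)

lemma Od_mult_transpose_vec: "A \<in> Od n \<Longrightarrow> x \<in> carrier_vec n \<Longrightarrow> A *\<^sub>v (A\<^sup>T *\<^sub>v x) = x"
  using Od_transpose_mult_vec[OF transpose_in_Od] by simp

lemma Od_scalar_prod:
  assumes "A \<in> Od n" "x \<in> carrier_vec n" "y \<in> carrier_vec n"
  shows "(A *\<^sub>v x) \<bullet> (A *\<^sub>v y) = x \<bullet> y"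
proof -
  have A: "A \<in> carrier_mat n n" using assms Od_carrier by auto
  have "(A *\<^sub>v x) \<bullet> (A *\<^sub>v y) = x \<bullet> (A\<^sup>T *\<^sub>v (A *\<^sub>v y))"
    using transpose_vec_mult_scalar[OF A assms(2), of "A *\<^sub>v y"] A assms comm_scalar_prod
    by (metis mult_mat_vec_carrier transpose_carrier_mat)
  then show ?thesis using Od_transpose_mult_vec[OF assms(1,3)] by simp
qed

lemma eq_mat_by_mult_vec:
  fixes A B :: "'a :: comm_ring_1 mat"
  assumes "A \<in> carrier_mat n m" "B \<in> carrier_mat n m"
    and "\<And>x. x \<in> carrier_vec m \<Longrightarrow> A *\<^sub>v x = B *\<^sub>v x"
  shows "A = B"
proof (rule eq_matI)
  fix i j assume ij: "i < dim_row B" "j < dim_col B"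
  have entry: "C $$ (i, j) = (C *\<^sub>v unit_vec m j) $ i" if "C \<in> carrier_mat n m" for C :: "'a mat"
    using that ij assms by auto
  show "A $$ (i, j) = B $$ (i, j)"
    using entry[OF assms(1)] entry[OF assms(2)] assms(3)[OF unit_vec_carrier] by simp
qed (use assms in auto)

lemma Od_if_transpose_mult_vec:
  assumes A: "A \<in> carrier_mat n n"
    and inv: "\<And>x. x \<in> carrier_vec n \<Longrightarrow> A\<^sup>T *\<^sub>v (A *\<^sub>v x) = x"
  shows "A \<in> Od n"
proof -
  have "A\<^sup>T * A = 1\<^sub>m n"
    by (rule eq_mat_by_mult_vec[of _ n n]) (use A inv in \<open>auto simp: assoc_mult_mat_vec[of _ n n]\<close>)
  then show ?thesis using mat_mult_left_right_inverse[of "A\<^sup>T" n A] A unfolding Od_def by auto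
qed

lemma act_mult:
  "set P \<subseteq> carrier_vec n \<Longrightarrow> A \<in> carrier_mat m k \<Longrightarrow> B \<in> carrier_mat k n \<Longrightarrow>
    act A (act B P) = act (A * B) P"
  by (auto simp: subset_iff)

lemma act_one: "set P \<subseteq> carrier_vec n \<Longrightarrow> act (1\<^sub>m n) P = P"
  by (induction P) auto

lemma act_carrier: "A \<in> carrier_mat m n \<Longrightarrow> set P \<subseteq> carrier_vec n \<Longrightarrow> set (act A P) \<subseteq> carrier_vec m"
  by auto

lemma act_in_cls: "A \<in> SOd d \<Longrightarrow> act A P \<in> cls d P"
  unfolding cls_def by auto

lemma self_in_cls: "set P \<subseteq> carrier_vec d \<Longrightarrow> P \<in> cls d P"
  using act_in_cls[of "1\<^sub>m d" d P] act_one one_in_Od SOd_iff by simp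

lemma cls_carrier: "Q \<in> cls d P \<Longrightarrow> set P \<subseteq> carrier_vec d \<Longrightarrow> set Q \<subseteq> carrier_vec d"
  unfolding cls_def SOd_def by (auto intro!: mult_mat_vec_carrier)

lemma cls_subset:
  assumes "Q \<in> cls d P" "set P \<subseteq> carrier_vec d"
  shows "cls d Q \<subseteq> cls d P"
proof
  fix X assume "X \<in> cls d Q"
  then obtain A' where A': "A' \<in> SOd d" "X = act A' Q" unfolding cls_def by auto
  obtain A where A: "A \<in> SOd d" "Q = act A P" using assms(1) unfolding cls_def by auto
  have "A' * A \<in> SOd d"
    using A A' mult_in_Od det_mult Od_carrier unfolding SOd_iff by (metis mult_1)
  moreover have "X = act (A' * A) P" using A A' assms(2) act_mult SOd_def by auto
  ultimately show "X \<in> cls d P" using act_in_cls by simp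
qed

lemma cls_sym:
  assumes "Q \<in> cls d P" "set P \<subseteq> carrier_vec d"
  shows "P \<in> cls d Q"
proof -
  obtain A where A: "A \<in> Od d" "det A = 1" "Q = act A P"
    using assms(1) unfolding cls_def SOd_iff by auto
  have Ac: "A \<in> carrier_mat d d" using A Od_carrier by auto
  have "act A\<^sup>T Q = act (A\<^sup>T * A) P" using act_mult assms(2) Ac A by auto
  also have "\<dots> = P" using Od_transpose_mult A act_one assms(2) by auto
  finally show ?thesis
    using act_in_cls[of "A\<^sup>T" d Q] A transpose_in_Od det_transpose[OF Ac] SOd_iff by metis
qed

lemma cls_eq: "Q \<in> cls d P \<Longrightarrow> set P \<subseteq> carrier_vec d \<Longrightarrow> cls d Q = cls d P"
  using cls_subset cls_sym cls_carrier by (metis subset_antisym)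

lemma cls_eq_iff:
  "set P \<subseteq> carrier_vec d \<Longrightarrow> set Q \<subseteq> carrier_vec d \<Longrightarrow> cls d Q = cls d P \<longleftrightarrow> Q \<in> cls d P"
  using cls_eq self_in_cls by blast

lemma orthogonal_vec_exists:
  fixes S :: "'a :: field vec set"
  assumes S: "finite S" "S \<subseteq> carrier_vec n" and card: "card S < n"
  shows "\<exists>w \<in> carrier_vec n. w \<noteq> 0\<^sub>v n \<and> (\<forall>s \<in> S. s \<bullet> w = 0)"
proof -
  obtain L where L: "set L = S" "distinct L" using finite_distinct_list[OF S(1)] by blast
  have k: "length L < n" using L card distinct_card by fastforce
  define rs where "rs = L @ replicate (n - length L) (0\<^sub>v n)"
  have rs: "length rs = n" "set rs \<subseteq> carrier_vec n" using k S(2) L unfolding rs_def by auto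
  define N where "N = mat_of_rows n rs"
  have N: "N \<in> carrier_mat n n" unfolding N_def using rs by auto
  have "rs ! length L = 0\<^sub>v n" using k by (simp add: rs_def nth_append)
  then have "N = mat\<^sub>r n n (\<lambda>i. if i = length L then 0\<^sub>v n else rs ! i)"
    unfolding N_def by (intro eq_matI) (use rs in \<open>auto simp: mat_of_rows_def\<close>)
  moreover have "(!) rs \<in> {0..<n} \<rightarrow> carrier_vec n" using rs nth_mem by fastforce
  ultimately have "det N = 0" using det_row_0[OF k, of "(!) rs"] by simp
  then obtain w where w: "w \<in> carrier_vec n" "w \<noteq> 0\<^sub>v n" "N *\<^sub>v w = 0\<^sub>v n"
    using det_0_iff_vec_prod_zero_field[OF N] by auto
  have "s \<bullet> w = 0" if "s \<in> S" for s
  proof -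
    have "s \<in> set L" using that L(1) by simp
    then obtain j where j: "j < length L" "L ! j = s" by (metis in_set_conv_nth)
    have rs_j: "rs ! j = s" unfolding rs_def using j by (simp add: nth_append)
    then have "rs ! j \<in> carrier_vec n" using that S(2) by auto
    then have "row N j = s" unfolding N_def using rs_j rs(1) j k by simp
    then have "(N *\<^sub>v w) $ j = s \<bullet> w" using j k N by simp
    then show ?thesis using w(3) j k by simp
  qed
  then show ?thesis using w by blast
qed

lemma self_scalar_prod_eq_0_iff: "(v :: real vec) \<in> carrier_vec n \<Longrightarrow> v \<bullet> v = 0 \<longleftrightarrow> v = 0\<^sub>v n"
  using conjugate_square_eq_0_vec[of v n] by simp

lemma (in vec_space) maximal_indpt_subset_span:
  assumes S: "maximal S (\<lambda>T. T \<subseteq> A \<and> lin_indpt T)" and A: "A \<subseteq> carrier_vec n"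
  shows "A \<subseteq> span S"
proof
  have S_A: "S \<subseteq> A" and li: "lin_indpt S" using S unfolding maximal_def by auto
  then have Sc: "S \<subseteq> carrier_vec n" using A by auto
  fix a assume a: "a \<in> A"
  show "a \<in> span S"
  proof (rule ccontr)
    assume a_out: "a \<notin> span S"
    then have "a \<notin> S" using span_mem[OF Sc] by auto
    have "lin_indpt (S \<union> {a})" using lin_dep_iff_in_span[of S a] Sc li a_out \<open>a \<notin> S\<close> a A by auto
    then show False using S S_A a \<open>a \<notin> S\<close> unfolding maximal_def by blast
  qed
qed

lemma rank_less_iff_orthogonal_vec:
  fixes M :: "real mat"
  assumes M: "M \<in> carrier_mat n k"
  shows "vec_space.rank n M < n \<longleftrightarrow>
    (\<exists>w \<in> carrier_vec n. w \<noteq> 0\<^sub>v n \<and> (\<forall>c \<in> set (cols M). w \<bullet> c = 0))"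
proof -
  interpret vec_space "TYPE(real)" n .
  let ?indpt = "\<lambda>T. T \<subseteq> set (cols M) \<and> lin_indpt T"
  obtain S where S: "maximal S ?indpt"
    using maximal_exists[of ?indpt "card (set (cols M))" "{}"]
    by (meson List.finite_set card_mono empty_iff empty_subsetI finite_lin_indpt2 rev_finite_subset)
  have cols: "set (cols M) \<subseteq> carrier_vec n" using M cols_dim by blast
  have S_cols: "S \<subseteq> set (cols M)" and li: "lin_indpt S" using S unfolding maximal_def by auto
  have Sc: "S \<subseteq> carrier_vec n" and fin: "finite S" using S_cols cols finite_subset by auto
  have rank: "rank M = card S" using rank_card_indpt[OF M S] .
  show ?thesis
  proof
    assume "rank M < n"
    then obtain w where w: "w \<in> carrier_vec n" "w \<noteq> 0\<^sub>v n" "\<forall>s \<in> S. s \<bullet> w = 0"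
      using orthogonal_vec_exists[OF fin Sc] rank by auto
    have "w \<in> orthogonal_complement S"
      using w Sc comm_scalar_prod[of w n] unfolding orthogonal_complement_def by auto
    then have w_span: "w \<in> orthogonal_complement (span S)" using Sc by simp
    have "set (cols M) \<subseteq> span S" using maximal_indpt_subset_span[OF S cols] .
    then show "\<exists>w \<in> carrier_vec n. w \<noteq> 0\<^sub>v n \<and> (\<forall>c \<in> set (cols M). w \<bullet> c = 0)"
      using w w_span unfolding orthogonal_complement_def by blast
  next
    assume "\<exists>w \<in> carrier_vec n. w \<noteq> 0\<^sub>v n \<and> (\<forall>c \<in> set (cols M). w \<bullet> c = 0)"
    then obtain w where w: "w \<in> carrier_vec n" "w \<noteq> 0\<^sub>v n" "\<forall>c \<in> set (cols M). w \<bullet> c = 0"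
      by blast
    show "rank M < n"
    proof (rule ccontr)
      assume "\<not> rank M < n"
      then have "basis S" using dim_li_is_basis[OF fin_dim fin Sc li] rank dim_is_n by simp
      then have "w \<in> span S" using w(1) unfolding basis_def by simp
      moreover have "w \<in> orthogonal_complement S"
        using w S_cols unfolding orthogonal_complement_def by auto
      then have "w \<in> orthogonal_complement (span S)" using Sc by simp
      ultimately have "w \<bullet> w = 0" unfolding orthogonal_complement_def by blast
      then show False using w self_scalar_prod_eq_0_iff by blast
    qed
  qed
qed

lemma unit_multiple_exists:
  fixes w :: "real vec"
  assumes w: "w \<in> carrier_vec n" "w \<noteq> 0\<^sub>v n"
  obtains c where "(c \<cdot>\<^sub>v w) \<bullet> (c \<cdot>\<^sub>v w) = 1"
proof
  have "w \<bullet> w \<noteq> 0" using self_scalar_prod_eq_0_iff w by blast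
  then have pos: "w \<bullet> w > 0" using conjugate_square_ge_0_vec[of w] by simp
  show "((1 / sqrt (w \<bullet> w)) \<cdot>\<^sub>v w) \<bullet> ((1 / sqrt (w \<bullet> w)) \<cdot>\<^sub>v w) = 1"
    using pos w by (simp add: real_sqrt_mult[symmetric])
qed

definition outer_prod :: "real vec \<Rightarrow> real mat" where
  "outer_prod z = mat (dim_vec z) (dim_vec z) (\<lambda>(i, j). z $ i * z $ j)"

definition householder :: "real vec \<Rightarrow> real mat" where
  "householder z = 1\<^sub>m (dim_vec z) - (2 / (z \<bullet> z)) \<cdot>\<^sub>m outer_prod z"

lemma outer_prod_carrier: "z \<in> carrier_vec n \<Longrightarrow> outer_prod z \<in> carrier_mat n n"
  unfolding outer_prod_def by auto

lemma outer_prod_transpose: "(outer_prod z)\<^sup>T = outer_prod z"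
  unfolding outer_prod_def by (intro eq_matI) auto

lemma outer_prod_mult_vec:
  assumes "z \<in> carrier_vec n" "y \<in> carrier_vec n"
  shows "outer_prod z *\<^sub>v y = (z \<bullet> y) \<cdot>\<^sub>v z"
proof (rule eq_vecI)
  fix i assume "i < dim_vec ((z \<bullet> y) \<cdot>\<^sub>v z)"
  then have i: "i < n" using assms by auto
  have "(outer_prod z *\<^sub>v y) $ i = (\<Sum>j = 0..<n. z $ i * (z $ j * y $ j))"
    unfolding outer_prod_def using assms i by (auto simp: scalar_prod_def mult.assoc)
  also have "\<dots> = z $ i * (z \<bullet> y)"
    using assms by (simp add: sum_distrib_left scalar_prod_def)
  finally show "(outer_prod z *\<^sub>v y) $ i = ((z \<bullet> y) \<cdot>\<^sub>v z) $ i"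
    using assms i by (simp add: mult.commute)
qed (use assms outer_prod_carrier in auto)

lemma householder_carrier: "z \<in> carrier_vec n \<Longrightarrow> householder z \<in> carrier_mat n n"
  unfolding householder_def
  by (rule minus_carrier_mat, rule smult_carrier_mat, rule outer_prod_carrier)

lemma householder_mult_vec:
  assumes z: "z \<in> carrier_vec n" and y: "y \<in> carrier_vec n"
  shows "householder z *\<^sub>v y = y - (2 / (z \<bullet> z) * (z \<bullet> y)) \<cdot>\<^sub>v z"
proof -
  have "householder z *\<^sub>v y = 1\<^sub>m n *\<^sub>v y - ((2 / (z \<bullet> z)) \<cdot>\<^sub>m outer_prod z) *\<^sub>v y"
    unfolding householder_def using z y outer_prod_carrier[OF z]
    by (subst minus_mult_distrib_mat_vec) auto
  also have "((2 / (z \<bullet> z)) \<cdot>\<^sub>m outer_prod z) *\<^sub>v y = (2 / (z \<bullet> z)) \<cdot>\<^sub>v (outer_prod z *\<^sub>v y)"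
    using z y outer_prod_carrier[OF z] by (auto simp: mult_mat_vec)
  finally show ?thesis using y outer_prod_mult_vec[OF z y] by (auto simp: smult_smult_assoc)
qed

lemma householder_transpose: "(householder z)\<^sup>T = householder z"
  unfolding householder_def outer_prod_def by (intro eq_matI) auto

lemma householder_involutive:
  assumes z: "z \<in> carrier_vec n" and y: "y \<in> carrier_vec n"
  shows "householder z *\<^sub>v (householder z *\<^sub>v y) = y"
proof (cases "z \<bullet> z = 0")
  case True
  have "householder z *\<^sub>v w = w" if "w \<in> carrier_vec n" for w
    using householder_mult_vec[OF z that] True by (intro eq_vecI) (use that z in auto)
  then show ?thesis using y householder_carrier[OF z] by simp
next
  case False
  define c where "c = 2 / (z \<bullet> z)"
  have Hy: "householder z *\<^sub>v y = y - (c * (z \<bullet> y)) \<cdot>\<^sub>v z"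
    using householder_mult_vec[OF z y] c_def by simp
  have "z \<bullet> (householder z *\<^sub>v y) = z \<bullet> y - c * (z \<bullet> y) * (z \<bullet> z)"
    unfolding Hy using z y by (simp add: scalar_prod_minus_distrib)
  also have "\<dots> = - (z \<bullet> y)" using False unfolding c_def by (simp add: field_simps)
  finally have zH: "z \<bullet> (householder z *\<^sub>v y) = - (z \<bullet> y)" .
  have "householder z *\<^sub>v (householder z *\<^sub>v y)
      = householder z *\<^sub>v y - (c * (z \<bullet> (householder z *\<^sub>v y))) \<cdot>\<^sub>v z"
    using householder_mult_vec[OF z, of "householder z *\<^sub>v y"] c_def householder_carrier[OF z] y
    by auto
  also have "\<dots> = (y - (c * (z \<bullet> y)) \<cdot>\<^sub>v z) - (c * - (z \<bullet> y)) \<cdot>\<^sub>v z" using zH Hy by simp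
  also have "\<dots> = y" by (rule eq_vecI) (use z y in auto)
  finally show ?thesis .
qed

lemma householder_in_Od: "z \<in> carrier_vec n \<Longrightarrow> householder z \<in> Od n"
  using Od_if_transpose_mult_vec householder_carrier householder_involutive householder_transpose
  by metis

text \<open>For a = b this relies on the junk value 2 / 0 = 0, which makes householder 0 the identity.\<close>

lemma householder_swap:
  assumes a: "a \<in> carrier_vec n" and b: "b \<in> carrier_vec n"
    and aa: "a \<bullet> a = 1" and bb: "b \<bullet> b = 1"
  shows "householder (a - b) *\<^sub>v a = b"
proof -
  have ba: "b \<bullet> a = a \<bullet> b" using comm_scalar_prod[OF a b] by simp
  have za: "(a - b) \<bullet> a = 1 - a \<bullet> b" using a b aa by (simp add: minus_scalar_prod_distrib ba)
  have zz: "(a - b) \<bullet> (a - b) = 2 - 2 * (a \<bullet> b)" using a b aa bb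
    by (simp add: minus_scalar_prod_distrib scalar_prod_minus_distrib ba)
  have H: "householder (a - b) *\<^sub>v a = a - (2 / ((a - b) \<bullet> (a - b)) * ((a - b) \<bullet> a)) \<cdot>\<^sub>v (a - b)"
    using householder_mult_vec[of "a - b" n a] a b by simp
  show ?thesis
  proof (cases "a \<bullet> b = 1")
    case True
    then have "(a - b) \<bullet> (a - b) = 0" using zz by simp
    then have "a - b = 0\<^sub>v n" using self_scalar_prod_eq_0_iff[of "a - b" n] a b by simp
    have "a = b"
    proof (rule eq_vecI)
      fix i assume i: "i < dim_vec b"
      then have "(a - b) $ i = 0" using \<open>a - b = 0\<^sub>v n\<close> b by simp
      then show "a $ i = b $ i" using i by simp
    qed (use a b in simp)
    then show ?thesis using H a by (intro eq_vecI) auto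
  next
    case False
    then have "2 / ((a - b) \<bullet> (a - b)) * ((a - b) \<bullet> a) = 1"
      unfolding za zz by (simp add: field_simps)
    then show ?thesis using H a b by (intro eq_vecI) auto
  qed
qed

lemma householder_fixes:
  assumes "a \<in> carrier_vec n" "b \<in> carrier_vec n" "y \<in> carrier_vec n"
    and "a \<bullet> y = 0" "b \<bullet> y = 0"
  shows "householder (a - b) *\<^sub>v y = y"
proof -
  have "(a - b) \<bullet> y = 0" using assms by (simp add: minus_scalar_prod_distrib)
  then show ?thesis using householder_mult_vec[of "a - b" n y] assms by auto
qed

lemma multrow_neg_one_in_Od: "k < n \<Longrightarrow> multrow_mat n k (-1) \<in> Od n"
proof -
  assume "k < n"
  then have "multrow_mat n k (-1) * multrow_mat n k (-1::real) = 1\<^sub>m n"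
    using multrow_mat_inv[of k n "-1::real"] by simp
  moreover have "(multrow_mat n k (-1::real))\<^sup>T = multrow_mat n k (-1)"
    by (intro eq_matI) (auto simp: multrow_mat_def)
  ultimately show ?thesis unfolding Od_def by simp
qed

lemma det_multrow_neg_one: "k < n \<Longrightarrow> det (multrow_mat n k (-1 :: real)) = -1"
  by (simp add: det_multrow_mat)

lemma multrow_neg_one_fixes:
  assumes "v \<in> carrier_vec n" "v $ k = 0"
  shows "multrow_mat n k (-1 :: real) *\<^sub>v v = v"
proof (rule eq_vecI)
  fix i assume "i < dim_vec v"
  then have i: "i < n" using assms by simp
  then show "(multrow_mat n k (-1) *\<^sub>v v) $ i = v $ i"
    using assms by (cases "i = k") (simp_all add: row_multrow)
qed (use assms in simp)

lemma unit_reflection_exists: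
  assumes w': "w' \<in> carrier_vec n" "w' \<bullet> w' = 1"
  shows "\<exists>F \<in> Od n. det F = -1 \<and> (\<forall>y \<in> carrier_vec n. w' \<bullet> y = 0 \<longrightarrow> F *\<^sub>v y = y)"
proof -
  have "w' \<noteq> 0\<^sub>v n" using w' by auto
  then have "n \<noteq> 0" using w' by auto
  define e :: "real vec" where "e = unit_vec n 0"
  have e: "e \<in> carrier_vec n" "e \<bullet> e = 1" unfolding e_def using \<open>n \<noteq> 0\<close> by auto
  define H where "H = householder (e - w')"
  have H: "H \<in> Od n" "H\<^sup>T = H" "H *\<^sub>v e = w'"
    unfolding H_def using householder_in_Od householder_transpose householder_swap e w' by auto
  have Hc: "H \<in> carrier_mat n n" using H Od_carrier by auto
  define R where "R = multrow_mat n 0 (-1 :: real)"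
  have R: "R \<in> Od n" "det R = -1"
    unfolding R_def using multrow_neg_one_in_Od det_multrow_neg_one \<open>n \<noteq> 0\<close> by auto
  have Rc: "R \<in> carrier_mat n n" using R Od_carrier by auto
  define F where "F = H * R * H"
  have "F \<in> Od n" unfolding F_def using H R mult_in_Od by auto
  moreover have "det F = -1"
    using det_Od[OF H(1)] R(2) det_mult[OF mult_carrier_mat[OF Hc Rc] Hc] det_mult[OF Hc Rc]
    unfolding F_def by auto
  moreover have "F *\<^sub>v y = y" if y: "y \<in> carrier_vec n" "w' \<bullet> y = 0" for y
  proof -
    have Hy: "H *\<^sub>v y \<in> carrier_vec n" using Hc y by auto
    have "e \<bullet> (H *\<^sub>v y) = w' \<bullet> y"
      using transpose_vec_mult_scalar[OF Hc y(1) e(1)] H(2,3) by simp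
    also have "\<dots> = 0" using y by simp
    finally have "R *\<^sub>v (H *\<^sub>v y) = H *\<^sub>v y"
      unfolding R_def using multrow_neg_one_fixes[OF Hy] Hy \<open>n \<noteq> 0\<close> unfolding e_def by auto
    then show ?thesis
      unfolding F_def using Hc Rc y Od_transpose_mult_vec[OF H(1) y(1)] H(2)
      by (simp add: assoc_mult_mat_vec[of _ n n _ n])
  qed
  ultimately show ?thesis by blast
qed

lemma reflection_exists:
  assumes w: "w \<in> carrier_vec n" "w \<noteq> 0\<^sub>v n"
  shows "\<exists>F \<in> Od n. det F = -1 \<and> (\<forall>y \<in> carrier_vec n. w \<bullet> y = 0 \<longrightarrow> F *\<^sub>v y = y)"
proof -
  obtain c where c: "(c \<cdot>\<^sub>v w) \<bullet> (c \<cdot>\<^sub>v w) = 1" using unit_multiple_exists[OF w] .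
  then obtain F where "F \<in> Od n" "det F = -1"
    "\<forall>y \<in> carrier_vec n. (c \<cdot>\<^sub>v w) \<bullet> y = 0 \<longrightarrow> F *\<^sub>v y = y"
    using unit_reflection_exists[of "c \<cdot>\<^sub>v w"] w(1) by auto
  then show ?thesis using w(1) by auto
qed

locale embedding_with_normal =
  fixes d :: nat and B :: "real mat" and u :: "real vec"
  assumes B_carrier: "B \<in> carrier_mat (d + 1) d"
    and B_isometric: "B\<^sup>T * B = 1\<^sub>m d"
    and u_carrier: "u \<in> carrier_vec (d + 1)"
    and u_unit: "u \<bullet> u = 1"
    and u_normal: "B\<^sup>T *\<^sub>v u = 0\<^sub>v d"
begin

lemma BT_carrier: "B\<^sup>T \<in> carrier_mat d (d + 1)"
  using B_carrier by simp

lemma u_orthogonal_range: "x \<in> carrier_vec d \<Longrightarrow> u \<bullet> (B *\<^sub>v x) = 0"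
  using transpose_vec_mult_scalar[OF B_carrier _ u_carrier] u_normal by simp

lemma transpose_mult_range: "x \<in> carrier_vec d \<Longrightarrow> B\<^sup>T *\<^sub>v (B *\<^sub>v x) = x"
  using B_carrier B_isometric by (simp add: assoc_mult_mat_vec[symmetric, of _ d "d + 1"])

lemma transpose_mult_combination:
  assumes x: "x \<in> carrier_vec d"
  shows "B\<^sup>T *\<^sub>v (B *\<^sub>v x + a \<cdot>\<^sub>v u) = x"
proof -
  have "B\<^sup>T *\<^sub>v (B *\<^sub>v x + a \<cdot>\<^sub>v u) = x + a \<cdot>\<^sub>v 0\<^sub>v d"
    using x B_carrier u_carrier u_normal transpose_mult_range
    by (simp add: mult_add_distrib_mat_vec[of _ d "d + 1"] mult_mat_vec)
  also have "\<dots> = x" using x by (intro eq_vecI) auto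
  finally show ?thesis .
qed

lemma u_scalar_prod_combination:
  "x \<in> carrier_vec d \<Longrightarrow> u \<bullet> (B *\<^sub>v x + a \<cdot>\<^sub>v u) = a"
  using B_carrier u_carrier u_unit u_orthogonal_range
  by (simp add: scalar_prod_add_distrib[of _ "d + 1"])

definition completion :: "real mat" where
  "completion = mat (d + 1) (d + 1) (\<lambda>(i, j). if j < d then B $$ (i, j) else u $ i)"

lemma index_completion:
  "i < d + 1 \<Longrightarrow> j < d + 1 \<Longrightarrow> completion $$ (i, j) = (if j < d then B $$ (i, j) else u $ i)"
  unfolding completion_def by simp

lemma col_completion: "j < d + 1 \<Longrightarrow> col completion j = (if j < d then col B j else u)"
  by (rule eq_vecI) (use B_carrier u_carrier in \<open>auto simp: completion_def\<close>)

lemma completion_in_Od: "completion \<in> Od (d + 1)"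
proof -
  let ?W = completion
  have W: "?W \<in> carrier_mat (d + 1) (d + 1)" unfolding completion_def by auto
  have col_B_u: "col B j \<bullet> u = 0" "u \<bullet> col B j = 0" if "j < d" for j
  proof -
    show "col B j \<bullet> u = 0" using u_normal that B_carrier
      by (metis index_mult_mat_vec index_transpose_mat(2,3) row_transpose index_zero_vec(1)
          carrier_matD)
    then show "u \<bullet> col B j = 0"
      using comm_scalar_prod[OF col_carrier_vec[OF that B_carrier] u_carrier] by simp
  qed
  have col_B_B: "col B i \<bullet> col B j = (if i = j then 1 else 0)" if "i < d" "j < d" for i j
    using B_isometric B_carrier that
    by (metis index_mult_mat(1) index_one_mat(1) index_transpose_mat(2,3) row_transpose
        carrier_matD)
  have "?W\<^sup>T * ?W = 1\<^sub>m (d + 1)"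
  proof (rule eq_matI)
    fix i j assume "i < dim_row (1\<^sub>m (d + 1))" "j < dim_col (1\<^sub>m (d + 1))"
    then have i: "i < d + 1" and j: "j < d + 1" by auto
    have "(?W\<^sup>T * ?W) $$ (i, j) = col ?W i \<bullet> col ?W j" using W i j by auto
    then show "(?W\<^sup>T * ?W) $$ (i, j) = 1\<^sub>m (d + 1) $$ (i, j)"
      unfolding col_completion[OF i] col_completion[OF j] using i j col_B_u col_B_B u_unit by auto
  qed (use W in auto)
  then show ?thesis
    using mat_mult_left_right_inverse[of "?W\<^sup>T" "d + 1" ?W] W unfolding Od_def by auto
qed

lemma orthogonal_decomposition:
  assumes y: "y \<in> carrier_vec (d + 1)"
  shows "B *\<^sub>v (B\<^sup>T *\<^sub>v y) + (u \<bullet> y) \<cdot>\<^sub>v u = y"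
proof -
  let ?W = completion
  have W: "?W \<in> carrier_mat (d + 1) (d + 1)" unfolding completion_def by auto
  have "y = ?W *\<^sub>v (?W\<^sup>T *\<^sub>v y)" using Od_mult_transpose_vec[OF completion_in_Od y] ..
  also have "\<dots> = B *\<^sub>v (B\<^sup>T *\<^sub>v y) + (u \<bullet> y) \<cdot>\<^sub>v u"
  proof (rule eq_vecI)
    fix i assume "i < dim_vec (B *\<^sub>v (B\<^sup>T *\<^sub>v y) + (u \<bullet> y) \<cdot>\<^sub>v u)"
    then have i: "i < d + 1" using u_carrier by auto
    have "(?W *\<^sub>v (?W\<^sup>T *\<^sub>v y)) $ i = (\<Sum>j < d + 1. ?W $$ (i, j) * (col ?W j \<bullet> y))"
      using W i y by (auto simp: scalar_prod_def atLeast0LessThan)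
    also have "\<dots> = (\<Sum>j < d. ?W $$ (i, j) * (col ?W j \<bullet> y)) + ?W $$ (i, d) * (col ?W d \<bullet> y)"
      by simp
    also have "(\<Sum>j < d. ?W $$ (i, j) * (col ?W j \<bullet> y)) = (\<Sum>j < d. B $$ (i, j) * (col B j \<bullet> y))"
      using i by (intro sum.cong) (auto simp: col_completion index_completion)
    also have "\<dots> = (B *\<^sub>v (B\<^sup>T *\<^sub>v y)) $ i"
      using B_carrier i y by (auto simp: scalar_prod_def atLeast0LessThan)
    also have "?W $$ (i, d) * (col ?W d \<bullet> y) = u $ i * (u \<bullet> y)"
      using i by (simp add: col_completion index_completion)
    finally show "(?W *\<^sub>v (?W\<^sup>T *\<^sub>v y)) $ i = (B *\<^sub>v (B\<^sup>T *\<^sub>v y) + (u \<bullet> y) \<cdot>\<^sub>v u) $ i"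
      using i B_carrier u_carrier y by auto
  qed (use W B_carrier u_carrier in auto)
  finally show ?thesis by simp
qed

lemma range_if_orthogonal_to_u:
  assumes "y \<in> carrier_vec (d + 1)" "u \<bullet> y = 0"
  shows "B *\<^sub>v (B\<^sup>T *\<^sub>v y) = y"
proof -
  have "B *\<^sub>v (B\<^sup>T *\<^sub>v y) + (u \<bullet> y) \<cdot>\<^sub>v u = B *\<^sub>v (B\<^sup>T *\<^sub>v y)"
    using assms B_carrier u_carrier by (intro eq_vecI) auto
  then show ?thesis using orthogonal_decomposition[OF assms(1)] by simp
qed

definition extend_mat :: "real mat \<Rightarrow> real mat" where
  "extend_mat C = B * C * B\<^sup>T + outer_prod u"

lemma extend_mat_carrier: "C \<in> carrier_mat d d \<Longrightarrow> extend_mat C \<in> carrier_mat (d + 1) (d + 1)"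
  unfolding extend_mat_def using B_carrier outer_prod_carrier[OF u_carrier] by auto

lemma extend_mat_mult_vec:
  assumes C: "C \<in> carrier_mat d d" and y: "y \<in> carrier_vec (d + 1)"
  shows "extend_mat C *\<^sub>v y = B *\<^sub>v (C *\<^sub>v (B\<^sup>T *\<^sub>v y)) + (u \<bullet> y) \<cdot>\<^sub>v u"
proof -
  have "extend_mat C *\<^sub>v y = (B * C * B\<^sup>T) *\<^sub>v y + outer_prod u *\<^sub>v y"
    unfolding extend_mat_def using B_carrier C y outer_prod_carrier[OF u_carrier]
    by (intro add_mult_distrib_mat_vec) auto
  also have "(B * C * B\<^sup>T) *\<^sub>v y = (B * C) *\<^sub>v (B\<^sup>T *\<^sub>v y)"
    by (rule assoc_mult_mat_vec) (use B_carrier C y in auto)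
  also have "\<dots> = B *\<^sub>v (C *\<^sub>v (B\<^sup>T *\<^sub>v y))"
    by (rule assoc_mult_mat_vec) (use B_carrier C y in auto)
  finally show ?thesis using outer_prod_mult_vec[OF u_carrier y] by simp
qed

lemma extend_mat_mult_range:
  assumes C: "C \<in> carrier_mat d d" and x: "x \<in> carrier_vec d"
  shows "extend_mat C *\<^sub>v (B *\<^sub>v x) = B *\<^sub>v (C *\<^sub>v x)"
proof -
  have "extend_mat C *\<^sub>v (B *\<^sub>v x) = B *\<^sub>v (C *\<^sub>v x) + 0 \<cdot>\<^sub>v u"
    using extend_mat_mult_vec[OF C, of "B *\<^sub>v x"] B_carrier x transpose_mult_range
      u_orthogonal_range
    by simp
  also have "\<dots> = B *\<^sub>v (C *\<^sub>v x)" using B_carrier C x u_carrier by (intro eq_vecI) auto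
  finally show ?thesis .
qed

lemma extend_mat_transpose:
  assumes C: "C \<in> carrier_mat d d"
  shows "(extend_mat C)\<^sup>T = extend_mat C\<^sup>T"
proof -
  have "(extend_mat C)\<^sup>T = (B * C * B\<^sup>T)\<^sup>T + (outer_prod u)\<^sup>T"
    unfolding extend_mat_def using B_carrier C outer_prod_carrier[OF u_carrier]
    by (intro transpose_add) auto
  also have "(B * C * B\<^sup>T)\<^sup>T = B * C\<^sup>T * B\<^sup>T"
    using transpose_mult3[OF B_carrier C BT_carrier] by simp
  finally show ?thesis unfolding extend_mat_def outer_prod_transpose .
qed

lemma extend_mat_in_Od:
  assumes C: "C \<in> Od d"
  shows "extend_mat C \<in> Od (d + 1)"
proof -
  have Cc: "C \<in> carrier_mat d d" using C Od_carrier by auto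
  have "(extend_mat C)\<^sup>T *\<^sub>v (extend_mat C *\<^sub>v y) = y" if y: "y \<in> carrier_vec (d + 1)" for y
  proof -
    define z where "z = C *\<^sub>v (B\<^sup>T *\<^sub>v y)"
    have z: "z \<in> carrier_vec d" unfolding z_def using Cc B_carrier y by auto
    have "extend_mat C *\<^sub>v y = B *\<^sub>v z + (u \<bullet> y) \<cdot>\<^sub>v u"
      unfolding z_def using extend_mat_mult_vec[OF Cc y] .
    then have "(extend_mat C)\<^sup>T *\<^sub>v (extend_mat C *\<^sub>v y) = B *\<^sub>v (C\<^sup>T *\<^sub>v z) + (u \<bullet> y) \<cdot>\<^sub>v u"
      unfolding extend_mat_transpose[OF Cc]
      using extend_mat_mult_vec[of "C\<^sup>T" "B *\<^sub>v z + (u \<bullet> y) \<cdot>\<^sub>v u"] Cc z B_carrier u_carrier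
        transpose_mult_combination[OF z] u_scalar_prod_combination[OF z]
      by auto
    also have "C\<^sup>T *\<^sub>v z = B\<^sup>T *\<^sub>v y"
      unfolding z_def using Od_transpose_mult_vec[OF C] B_carrier y by auto
    finally show ?thesis using orthogonal_decomposition[OF y] by simp
  qed
  then show ?thesis using Od_if_transpose_mult_vec extend_mat_carrier[OF Cc] by blast
qed

text \<open>Extend C by the identity on the normal line; if this reverses orientation, compose with
  the reflection in the hyperplane.\<close>

lemma lift_Od:
  assumes C: "C \<in> Od d"
  shows "\<exists>A \<in> SOd (d + 1). \<forall>x \<in> carrier_vec d. A *\<^sub>v (B *\<^sub>v x) = B *\<^sub>v (C *\<^sub>v x)"
proof -
  have Cc: "C \<in> carrier_mat d d" using C Od_carrier by auto
  let ?E = "extend_mat C"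
  have E: "?E \<in> Od (d + 1)" "?E \<in> carrier_mat (d + 1) (d + 1)"
    using extend_mat_in_Od[OF C] extend_mat_carrier[OF Cc] by auto
  show ?thesis
  proof (cases "det ?E = 1")
    case True
    then show ?thesis using E extend_mat_mult_range[OF Cc] SOd_iff by blast
  next
    case False
    then have det_E: "det ?E = -1" using det_Od[OF E(1)] by auto
    obtain F where F: "F \<in> Od (d + 1)" "det F = -1"
      "\<forall>y \<in> carrier_vec (d + 1). u \<bullet> y = 0 \<longrightarrow> F *\<^sub>v y = y"
      using unit_reflection_exists[OF u_carrier u_unit] by blast
    have Fc: "F \<in> carrier_mat (d + 1) (d + 1)" using F Od_carrier by auto
    have "?E * F \<in> SOd (d + 1)"
      using mult_in_Od[OF E(1) F(1)] det_mult[OF E(2) Fc] det_E F(2) SOd_iff by simp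
    moreover have "(?E * F) *\<^sub>v (B *\<^sub>v x) = B *\<^sub>v (C *\<^sub>v x)" if x: "x \<in> carrier_vec d" for x
    proof -
      have "F *\<^sub>v (B *\<^sub>v x) = B *\<^sub>v x" using F(3) u_orthogonal_range[OF x] B_carrier x by auto
      then show ?thesis using E(2) Fc B_carrier x extend_mat_mult_range[OF Cc x] by auto
    qed
    ultimately show ?thesis by blast
  qed
qed

definition restrict_mat :: "real mat \<Rightarrow> real mat" where
  "restrict_mat N = B\<^sup>T * N * B"

lemma restrict_mat_carrier: "N \<in> carrier_mat (d + 1) (d + 1) \<Longrightarrow> restrict_mat N \<in> carrier_mat d d"
  unfolding restrict_mat_def using B_carrier by auto

lemma restrict_mat_mult_vec:
  assumes N: "N \<in> carrier_mat (d + 1) (d + 1)" and x: "x \<in> carrier_vec d"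
  shows "restrict_mat N *\<^sub>v x = B\<^sup>T *\<^sub>v (N *\<^sub>v (B *\<^sub>v x))"
proof -
  have "restrict_mat N *\<^sub>v x = (B\<^sup>T * N) *\<^sub>v (B *\<^sub>v x)" unfolding restrict_mat_def
    by (rule assoc_mult_mat_vec) (use B_carrier N x in auto)
  also have "\<dots> = B\<^sup>T *\<^sub>v (N *\<^sub>v (B *\<^sub>v x))"
    by (rule assoc_mult_mat_vec) (use B_carrier N x in auto)
  finally show ?thesis .
qed

lemma restrict_mat_mult_range:
  assumes N: "N \<in> Od (d + 1)" "N *\<^sub>v u = u" and x: "x \<in> carrier_vec d"
  shows "B *\<^sub>v (restrict_mat N *\<^sub>v x) = N *\<^sub>v (B *\<^sub>v x)"
proof -
  have Nc: "N \<in> carrier_mat (d + 1) (d + 1)" using N Od_carrier by auto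
  have "N\<^sup>T *\<^sub>v u = u" using Od_transpose_mult_vec[OF N(1) u_carrier] N(2) by simp
  then have "u \<bullet> (N *\<^sub>v (B *\<^sub>v x)) = 0"
    using transpose_vec_mult_scalar[OF Nc _ u_carrier, of "B *\<^sub>v x"] B_carrier x u_orthogonal_range
    by auto
  then show ?thesis
    using restrict_mat_mult_vec[OF Nc x] range_if_orthogonal_to_u Nc B_carrier x by simp
qed

lemma restrict_mat_in_Od:
  assumes N: "N \<in> Od (d + 1)" "N *\<^sub>v u = u"
  shows "restrict_mat N \<in> Od d"
proof -
  have Nc: "N \<in> carrier_mat (d + 1) (d + 1)" using N Od_carrier by auto
  have restrict_T: "(restrict_mat N)\<^sup>T = restrict_mat N\<^sup>T"
    unfolding restrict_mat_def using transpose_mult3[OF BT_carrier Nc B_carrier]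
    by simp
  have "(restrict_mat N)\<^sup>T *\<^sub>v (restrict_mat N *\<^sub>v x) = x" if x: "x \<in> carrier_vec d" for x
  proof -
    have "(restrict_mat N)\<^sup>T *\<^sub>v (restrict_mat N *\<^sub>v x)
        = B\<^sup>T *\<^sub>v (N\<^sup>T *\<^sub>v (B *\<^sub>v (restrict_mat N *\<^sub>v x)))"
      unfolding restrict_T
      by (rule restrict_mat_mult_vec) (use Nc x restrict_mat_carrier[OF Nc] in auto)
    also have "\<dots> = B\<^sup>T *\<^sub>v (B *\<^sub>v x)"
      using restrict_mat_mult_range[OF N x] Od_transpose_mult_vec[OF N(1)] B_carrier x by simp
    finally show ?thesis using transpose_mult_range[OF x] by simp
  qed
  then show ?thesis using Od_if_transpose_mult_vec restrict_mat_carrier[OF Nc] by blast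
qed

text \<open>Compose A with the Householder reflection exchanging u and A^T u: it fixes the points of
  B P, and the composite fixes u, so it restricts to the hyperplane.\<close>

lemma descend_Od:
  assumes A: "A \<in> Od (d + 1)"
    and P: "set P \<subseteq> carrier_vec d" and Q: "set Q \<subseteq> carrier_vec d"
    and AP: "act A (act B P) = act B Q"
  shows "\<exists>C \<in> Od d. Q = act C P"
proof -
  have Ac: "A \<in> carrier_mat (d + 1) (d + 1)" using A Od_carrier by auto
  have len: "length Q = length P" using arg_cong[OF AP, of length] by simp
  have AB: "A *\<^sub>v (B *\<^sub>v (P ! i)) = B *\<^sub>v (Q ! i)" if "i < length P" for i
    using arg_cong[OF AP, of "\<lambda>xs. xs ! i"] that len by simp
  define v where "v = A\<^sup>T *\<^sub>v u"
  have v: "v \<in> carrier_vec (d + 1)" "v \<bullet> v = 1" "A *\<^sub>v v = u"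
    unfolding v_def
    using Ac u_carrier u_unit Od_scalar_prod[OF transpose_in_Od[OF A] u_carrier u_carrier]
      Od_mult_transpose_vec[OF A u_carrier]
    by auto
  define H where "H = householder (u - v)"
  have H: "H \<in> Od (d + 1)" "H *\<^sub>v u = v" "H \<in> carrier_mat (d + 1) (d + 1)"
    unfolding H_def using householder_in_Od householder_swap[OF u_carrier v(1) u_unit v(2)]
      householder_carrier u_carrier v(1) by auto
  define N where "N = A * H"
  have N: "N \<in> Od (d + 1)" "N *\<^sub>v u = u"
    unfolding N_def using mult_in_Od[OF A H(1)] Ac H u_carrier v(3) by auto
  have "Q ! i = restrict_mat N *\<^sub>v (P ! i)" if i: "i < length P" for i
  proof -
    have p: "P ! i \<in> carrier_vec d" and q: "Q ! i \<in> carrier_vec d" using P Q i len by auto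
    have Bp: "B *\<^sub>v (P ! i) \<in> carrier_vec (d + 1)" using B_carrier p by auto
    have "v \<bullet> (B *\<^sub>v (P ! i)) = u \<bullet> (A *\<^sub>v (B *\<^sub>v (P ! i)))"
      unfolding v_def using transpose_vec_mult_scalar[OF Ac Bp u_carrier] .
    also have "\<dots> = 0" using AB[OF i] u_orthogonal_range[OF q] by simp
    finally have "H *\<^sub>v (B *\<^sub>v (P ! i)) = B *\<^sub>v (P ! i)"
      unfolding H_def using householder_fixes[OF u_carrier v(1) Bp u_orthogonal_range[OF p]] by simp
    then have "B *\<^sub>v (restrict_mat N *\<^sub>v (P ! i)) = B *\<^sub>v (Q ! i)"
      using restrict_mat_mult_range[OF N p] AB[OF i] Ac H(3) Bp unfolding N_def by simp
    then show ?thesis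
      using transpose_mult_range[OF q] transpose_mult_range restrict_mat_carrier Od_carrier N(1) p
      by (metis mult_mat_vec_carrier)
  qed
  then have "Q = act (restrict_mat N) P" using len by (intro nth_equalityI) auto
  then show ?thesis using restrict_mat_in_Od[OF N] by blast
qed

lemma image_in_cls_iff:
  assumes P: "set P \<subseteq> carrier_vec d" and Q: "set Q \<subseteq> carrier_vec d"
  shows "act B Q \<in> cls (d + 1) (act B P) \<longleftrightarrow> (\<exists>C \<in> Od d. Q = act C P)"
proof
  assume "act B Q \<in> cls (d + 1) (act B P)"
  then obtain A where "A \<in> SOd (d + 1)" "act A (act B P) = act B Q" unfolding cls_def by auto
  then show "\<exists>C \<in> Od d. Q = act C P" using descend_Od[OF _ P Q] SOd_iff by blast
next
  assume "\<exists>C \<in> Od d. Q = act C P"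
  then obtain C where C: "C \<in> Od d" "Q = act C P" by blast
  obtain A where A: "A \<in> SOd (d + 1)" "\<forall>x \<in> carrier_vec d. A *\<^sub>v (B *\<^sub>v x) = B *\<^sub>v (C *\<^sub>v x)"
    using lift_Od[OF C(1)] by blast
  have "act A (act B P) = act B Q" using A(2) P C(2) by (auto simp: subset_iff)
  then show "act B Q \<in> cls (d + 1) (act B P)" using act_in_cls[OF A(1)] by metis
qed

end

lemma lin_isom_normal_exists:
  assumes "lin_isom d B"
  obtains u where "embedding_with_normal d B u"
proof -
  have B: "B \<in> carrier_mat (d + 1) d" and BB: "B\<^sup>T * B = 1\<^sub>m d"
    using assms unfolding lin_isom_def by auto
  interpret vs: vec_space "TYPE(real)" "d + 1" .
  have "vs.rank B < d + 1" using vs.rank_le_nc[OF B] by simp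
  then obtain w where w: "w \<in> carrier_vec (d + 1)" "w \<noteq> 0\<^sub>v (d + 1)"
    "\<forall>c \<in> set (cols B). w \<bullet> c = 0"
    using rank_less_iff_orthogonal_vec[OF B] by blast
  obtain c where c: "(c \<cdot>\<^sub>v w) \<bullet> (c \<cdot>\<^sub>v w) = 1" using unit_multiple_exists[OF w(1,2)] .
  have "B\<^sup>T *\<^sub>v (c \<cdot>\<^sub>v w) = 0\<^sub>v d"
  proof (rule eq_vecI)
    fix j assume "j < dim_vec (0\<^sub>v d)"
    then have j: "j < d" by simp
    have "w \<bullet> col B j = 0" using w(3) B j by (simp add: cols_def)
    then have "col B j \<bullet> w = 0" using comm_scalar_prod[OF col_carrier_vec[OF j B] w(1)] by simp
    then show "(B\<^sup>T *\<^sub>v (c \<cdot>\<^sub>v w)) $ j = 0\<^sub>v d $ j" using B j w(1) by simp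
  qed (use B in simp)
  then show thesis
    using that[of "c \<cdot>\<^sub>v w"] B BB w(1) c unfolding embedding_with_normal_def by simp
qed

lemma phi_cls:
  assumes B: "lin_isom d B" and P: "set P \<subseteq> carrier_vec d"
  shows "phi d B (cls d P) = cls (d + 1) (act B P)"
proof -
  obtain u where "embedding_with_normal d B u" using lin_isom_normal_exists[OF B] .
  then interpret embedding_with_normal d B u .
  define P' where "P' = (SOME P'. P' \<in> cls d P)"
  have "P' \<in> cls d P" unfolding P'_def using self_in_cls[OF P] by (rule someI)
  then obtain A where A: "A \<in> SOd d" "P' = act A P" unfolding cls_def by auto
  then have "act B P' \<in> cls (d + 1) (act B P)"
    using image_in_cls_iff[OF P] act_carrier[OF _ P] SOd_iff by (metis Od_carrier)
  then show ?thesis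
    unfolding phi_def Fmap_def P'_def[symmetric] using cls_eq act_carrier[OF B_carrier P] by blast
qed

lemma phi_cls_eq_iff:
  assumes B: "lin_isom d B" and P: "set P \<subseteq> carrier_vec d" and Q: "set Q \<subseteq> carrier_vec d"
  shows "phi d B (cls d Q) = phi d B (cls d P) \<longleftrightarrow> (\<exists>C \<in> Od d. Q = act C P)"
proof -
  obtain u where "embedding_with_normal d B u" using lin_isom_normal_exists[OF B] .
  then interpret embedding_with_normal d B u .
  have "phi d B (cls d Q) = phi d B (cls d P) \<longleftrightarrow> cls (d + 1) (act B Q) = cls (d + 1) (act B P)"
    using phi_cls[OF B] P Q by simp
  also have "\<dots> \<longleftrightarrow> act B Q \<in> cls (d + 1) (act B P)"
    using cls_eq_iff act_carrier[OF B_carrier] P Q by blast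
  also have "\<dots> \<longleftrightarrow> (\<exists>C \<in> Od d. Q = act C P)" using image_in_cls_iff[OF P Q] .
  finally show ?thesis .
qed

lemma vtx_carrier:
  assumes "set P \<subseteq> carrier_vec d" "length P = n - 1" "i \<le> n"
  shows "vtx d n P i \<in> carrier_vec d"
  using assms unfolding vtx_def by (cases "i = 0 \<or> i = n") auto

lemma vtx_act:
  assumes C: "C \<in> carrier_mat d d" and P: "set P \<subseteq> carrier_vec d" "length P = n - 1" and i: "i \<le> n"
  shows "vtx d n (act C P) i = C *\<^sub>v vtx d n P i"
proof (cases "i = 0 \<or> i = n")
  case True
  have "C *\<^sub>v 0\<^sub>v d = 0\<^sub>v d" using C by (intro eq_vecI) (auto simp: scalar_prod_def)
  then show ?thesis using True unfolding vtx_def by auto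
next
  case False
  then show ?thesis using P i unfolding vtx_def by auto
qed

lemma Vsp_act:
  assumes C: "C \<in> Od d" and P: "P \<in> Vsp d l"
  shows "act C P \<in> Vsp d l"
proof -
  have Cc: "C \<in> carrier_mat d d" using C Od_carrier by auto
  have Pc: "set P \<subseteq> carrier_vec d" and len: "length P = length l - 1"
    using P unfolding Vsp_def by auto
  let ?n = "length l"
  have "enorm (vtx d ?n (act C P) i - vtx d ?n (act C P) (i - 1)) = l ! (i - 1)"
    if i: "i \<in> {1..?n}" for i
  proof -
    let ?a = "vtx d ?n P i" and ?b = "vtx d ?n P (i - 1)"
    have a: "?a \<in> carrier_vec d" and b: "?b \<in> carrier_vec d"
      using vtx_carrier[OF Pc len] i by auto
    have "vtx d ?n (act C P) i - vtx d ?n (act C P) (i - 1) = C *\<^sub>v (?a - ?b)"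
      using vtx_act[OF Cc Pc len] i mult_minus_distrib_mat_vec[OF Cc a b] by auto
    then have "enorm (vtx d ?n (act C P) i - vtx d ?n (act C P) (i - 1)) = enorm (?a - ?b)"
      unfolding enorm_def using Od_scalar_prod[OF C, of "?a - ?b" "?a - ?b"] a b by auto
    also have "\<dots> = l ! (i - 1)" using P i unfolding Vsp_def by auto
    finally show ?thesis .
  qed
  then show ?thesis unfolding Vsp_def using len Pc Cc by auto
qed

lemma cls_act_Od_cases:
  assumes R: "R \<in> Od d" "det R = -1" and C: "C \<in> Od d" and P: "set P \<subseteq> carrier_vec d"
  shows "cls d (act C P) = cls d P \<or> cls d (act C P) = cls d (act R P)"
proof (cases "det C = 1")
  case True
  then have "act C P \<in> cls d P" using act_in_cls C SOd_iff by blast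
  then show ?thesis using cls_eq[OF _ P] by blast
next
  case False
  then have det_C: "det C = -1" using det_Od[OF C] by auto
  have Rc: "R \<in> carrier_mat d d" and Cc: "C \<in> carrier_mat d d" using R C Od_carrier by auto
  have "act (C * R\<^sup>T) (act R P) = act (C * R\<^sup>T * R) P"
    by (rule act_mult[of P d "C * R\<^sup>T" d d R]) (use P Rc Cc in simp_all)
  also have "C * R\<^sup>T * R = C"
    using Od_transpose_mult[OF R(1)] Rc Cc by (simp add: assoc_mult_mat[of C d d "R\<^sup>T" d R d])
  finally have "act C P = act (C * R\<^sup>T) (act R P)" by simp
  moreover have "C * R\<^sup>T \<in> SOd d"
    using mult_in_Od[OF C transpose_in_Od[OF R(1)]] det_mult[OF Cc, of "R\<^sup>T"] Rc
      det_transpose[OF Rc] det_C R(2) SOd_iff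
    by simp
  ultimately have "act C P \<in> cls d (act R P)" using act_in_cls by metis
  then show ?thesis using cls_eq act_carrier[OF Rc P] by blast
qed

lemma phi_fiber:
  assumes B: "lin_isom d B" and P: "P \<in> Vsp d l" and R: "R \<in> Od d" "det R = -1"
  shows "{c \<in> Msp d l. phi d B c = phi d B (cls d P)} = {cls d P, cls d (act R P)}"
proof (intro equalityI subsetI)
  have Pc: "set P \<subseteq> carrier_vec d" using P unfolding Vsp_def by auto
  fix c assume "c \<in> {c \<in> Msp d l. phi d B c = phi d B (cls d P)}"
  then obtain Q where Q: "Q \<in> Vsp d l" "c = cls d Q" "phi d B (cls d Q) = phi d B (cls d P)"
    unfolding Msp_def by auto
  have Qc: "set Q \<subseteq> carrier_vec d" using Q(1) unfolding Vsp_def by auto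
  obtain C where "C \<in> Od d" "Q = act C P" using phi_cls_eq_iff[OF B Pc Qc] Q(3) by blast
  then show "c \<in> {cls d P, cls d (act R P)}" using cls_act_Od_cases[OF R _ Pc] Q(2) by auto
next
  have Pc: "set P \<subseteq> carrier_vec d" using P unfolding Vsp_def by auto
  have "act R P \<in> Vsp d l" using Vsp_act[OF R(1) P] .
  moreover have "phi d B (cls d (act R P)) = phi d B (cls d P)"
    using phi_cls_eq_iff[OF B Pc act_carrier[OF _ Pc]] R(1) Od_carrier by blast
  moreover fix c assume "c \<in> {cls d P, cls d (act R P)}"
  ultimately show "c \<in> {c \<in> Msp d l. phi d B c = phi d B (cls d P)}"
    using P unfolding Msp_def by auto
qed

lemma mat_eq_on_full_rank_cols:
  fixes R A :: "real mat"
  assumes R: "R \<in> carrier_mat n n" and A: "A \<in> carrier_mat n n" and P: "set P \<subseteq> carrier_vec n"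
    and rank: "vec_space.rank n (mat_of_cols n P) = n" and eq: "act R P = act A P"
  shows "R = A"
proof (rule ccontr)
  assume "R \<noteq> A"
  then obtain i j where ij: "i < n" "j < n" "R $$ (i, j) \<noteq> A $$ (i, j)"
    using R A by (metis carrier_matD eq_matI)
  define w where "w = row R i - row A i"
  have w: "w \<in> carrier_vec n" "w \<noteq> 0\<^sub>v n"
    unfolding w_def using R A ij by (auto simp: vec_eq_iff)
  have "w \<bullet> p = 0" if p: "p \<in> set P" for p
  proof -
    have "R *\<^sub>v p = A *\<^sub>v p" using eq p by (simp add: map_eq_conv)
    then have "(R *\<^sub>v p) $ i = (A *\<^sub>v p) $ i" by simp
    then have "row R i \<bullet> p = row A i \<bullet> p" using R A ij by simp
    then show ?thesis
      unfolding w_def using R A ij P p by (simp add: minus_scalar_prod_distrib[of _ n] subset_iff)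
  qed
  then have "vec_space.rank n (mat_of_cols n P) < n"
    using rank_less_iff_orthogonal_vec[of "mat_of_cols n P" n "length P"] w P by auto
  then show False using rank by simp
qed

lemma cls_act_reflection_neq:
  assumes R: "R \<in> Od d" "det R = -1" and P: "set P \<subseteq> carrier_vec d" and dim: "pdim d P = d"
  shows "cls d (act R P) \<noteq> cls d P"
proof
  assume "cls d (act R P) = cls d P"
  then have "act R P \<in> cls d P" using self_in_cls act_carrier[OF _ P] R(1) Od_carrier by metis
  then obtain A where A: "A \<in> SOd d" "act R P = act A P" unfolding cls_def by auto
  then have "R = A"
    using mat_eq_on_full_rank_cols[OF _ _ P] dim R(1) Od_carrier SOd_iff unfolding pdim_def by blast
  then show False using R(2) A(1) SOd_iff by simp
qed

lemma cls_act_reflection_eq: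
  assumes R: "R \<in> Od d" "det R = -1" and P: "set P \<subseteq> carrier_vec d" and dim: "pdim d P < d"
  shows "cls d (act R P) = cls d P"
proof -
  obtain w where w: "w \<in> carrier_vec d" "w \<noteq> 0\<^sub>v d" "\<forall>p \<in> set P. w \<bullet> p = 0"
    using rank_less_iff_orthogonal_vec[of "mat_of_cols d P" d "length P"] dim P
    unfolding pdim_def by auto
  obtain F where F: "F \<in> Od d" "det F = -1" "\<forall>y \<in> carrier_vec d. w \<bullet> y = 0 \<longrightarrow> F *\<^sub>v y = y"
    using reflection_exists[OF w(1,2)] by blast
  have Rc: "R \<in> carrier_mat d d" and Fc: "F \<in> carrier_mat d d" using R F Od_carrier by auto
  have "act F P = P" using F(3) w(3) P by (induction P) auto
  then have "act R P = act (R * F) P" using act_mult[OF P Rc Fc] by simp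
  moreover have "R * F \<in> SOd d"
    using mult_in_Od[OF R(1) F(1)] det_mult[OF Rc Fc] R(2) F(2) SOd_iff by simp
  ultimately have "act R P \<in> cls d P" using act_in_cls by metis
  then show ?thesis using cls_eq P by blast
qed

theorem proposition5p2:
  fixes l :: "real list" and d :: nat and B :: "real mat" and P :: "real vec list"
  assumes "length l \<ge> 3" and "d \<ge> 2" and "\<forall>x\<in>set l. x > 0"
    and "lin_isom d B"
    and "P \<in> Vsp d l"
  shows "(pdim d P = d \<longrightarrow> card {c \<in> Msp d l. phi d B c = phi d B (cls d P)} = 2)
       \<and> (pdim d P < d \<longrightarrow> card {c \<in> Msp d l. phi d B c = phi d B (cls d P)} = 1)"
proof -
  define R where "R = multrow_mat d 0 (-1 :: real)"
  have R: "R \<in> Od d" "det R = -1"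
    unfolding R_def using assms(2) multrow_neg_one_in_Od det_multrow_neg_one by auto
  have P: "set P \<subseteq> carrier_vec d" using assms(5) unfolding Vsp_def by auto
  show ?thesis
    unfolding phi_fiber[OF assms(4,5) R]
    using cls_act_reflection_neq[OF R P] cls_act_reflection_eq[OF R P] by auto
qed

end
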